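(* Let $k$ be a positive integer and $\alpha \in (0,1]$. If $\frac{\alpha}{1 - \ln \alpha} \geq \frac{2}{k + 1}$, then in any election there exists an $\alpha$-undominated committee of size $k$.
   Context: An election consists of a finite set $V$ of $n$ voters, a finite set $C$ of $m$ candidates, and for each voter $v$ a strict linear order $\succ_v$ on $C$ (her preference ranking). A committee is a subset $S \subseteq C$. For a candidate $a$ and committee $S$, write $a \succ_v S$ if $v$ prefers $a$ to every member of $S$, and let $\frac1n|a \succ S| = \frac1n|\{v \in V : a \succ_v S\}|$ (this is $0$ if $a \in S$). A committee $S$ is $\alpha$-undominated if for every candidate $a \in C$, $\frac1n|a \succ S| < \alpha$. *)

theory Defs
  imports Complex_Main
begin

text \<open>An election: finite nonempty voter set V, finite candidate set C, and for each
voter v a strict linear order on C, given by pref v a b meaning that v prefers a to b.\<close>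

definition strict_linear_order_on :: "'c set \<Rightarrow> ('c \<Rightarrow> 'c \<Rightarrow> bool) \<Rightarrow> bool" where
  "strict_linear_order_on C r \<longleftrightarrow>
     (\<forall>a\<in>C. \<not> r a a) \<and>
     (\<forall>a\<in>C. \<forall>b\<in>C. \<forall>c\<in>C. r a b \<longrightarrow> r b c \<longrightarrow> r a c) \<and>
     (\<forall>a\<in>C. \<forall>b\<in>C. a \<noteq> b \<longrightarrow> r a b \<or> r b a)"

definition election :: "'v set \<Rightarrow> 'c set \<Rightarrow> ('v \<Rightarrow> 'c \<Rightarrow> 'c \<Rightarrow> bool) \<Rightarrow> bool" where
  "election V C pref \<longleftrightarrow> finite V \<and> V \<noteq> {} \<and> finite C \<and>
     (\<forall>v\<in>V. strict_linear_order_on C (pref v))"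

definition prefer_set :: "'v set \<Rightarrow> ('v \<Rightarrow> 'c \<Rightarrow> 'c \<Rightarrow> bool) \<Rightarrow> 'c \<Rightarrow> 'c set \<Rightarrow> 'v set" where
  "prefer_set V pref a S = {v \<in> V. \<forall>b\<in>S. pref v a b}"

definition undominated ::
  "real \<Rightarrow> 'v set \<Rightarrow> 'c set \<Rightarrow> ('v \<Rightarrow> 'c \<Rightarrow> 'c \<Rightarrow> bool) \<Rightarrow> 'c set \<Rightarrow> bool" where
  "undominated \<alpha> V C pref S \<longleftrightarrow>
     (\<forall>a\<in>C. real (card (prefer_set V pref a S)) / real (card V) < \<alpha>)"

end

(*
  Let n be the number of voters and r = ceiling (alpha n). Consider the zero-sum game in which
  a lottery p over candidates faces a challenge (a, W), W a group of r voters, and pays the number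
  of voters in W who prefer a to the drawn candidate. Answering a mixed challenge by drawing a
  challenge from that same mixture and playing its candidate shows that the game has value at
  most r - r^2/(2n), by asymmetry of the preferences and Cauchy-Schwarz; multiplicative weights
  turn this into a lottery p that achieves the value up to any epsilon against every challenge.

  Now draw k candidates independently from p. A voter lays out the candidates on [0, 1] in her
  order, each with length p; cut at 1 - t, the expected mass she ranks above all draws is a
  Riemann sum for the integral of x^k, at most (1 - t)^(k+1)/(k+1). Fix a good draw and pad it to
  a committee of size k. If r voters preferred some a to the whole committee, the lottery would
  pay at least r (1 - t) - n (1 - t)^(k+1)/(k+1) against the challenge they form, and with
  t = -ln alpha / k the hypothesis on alpha makes this exceed the value of the game. For alpha = 1
  any committee containing some voter's favourite works.
*)

theory Submission
  imports Defs "HOL-Analysis.Convex"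
begin

lemma strict_linear_order_on_subset:
  assumes "strict_linear_order_on C R" and "A \<subseteq> C"
  shows "strict_linear_order_on A R"
  using assms unfolding strict_linear_order_on_def by blast

lemma strict_linear_order_on_asym:
  assumes "strict_linear_order_on C R" and "a \<in> C" and "b \<in> C" and "R a b"
  shows "\<not> R b a"
  using assms unfolding strict_linear_order_on_def by blast

lemma strict_linear_order_on_ex_top:
  assumes "strict_linear_order_on A R" and "finite A" and "A \<noteq> {}"
  shows "\<exists>c\<in>A. \<forall>d\<in>A. d \<noteq> c \<longrightarrow> R c d"
  using assms(2,3,1)
proof (induction A rule: finite_ne_induct)
  case (singleton x)
  then show ?case by auto
next
  case (insert x F)
  then obtain c where c: "c \<in> F" "\<forall>d\<in>F. d \<noteq> c \<longrightarrow> R c d"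
    using strict_linear_order_on_subset by blast
  show ?case
  proof (cases "R c x")
    case True
    with c show ?thesis by auto
  next
    case False
    have "x \<noteq> c"
      using c insert.hyps by auto
    with False c insert.prems have "R x c"
      unfolding strict_linear_order_on_def by blast
    with c insert.prems have "\<forall>d\<in>F. d \<noteq> c \<longrightarrow> R x d"
      unfolding strict_linear_order_on_def by blast
    with \<open>R x c\<close> show ?thesis by auto
  qed
qed

lemma strict_linear_order_on_top_induct [consumes 2, case_names empty insert_top]:
  assumes "finite A" and "strict_linear_order_on A R"
    and empty: "P {}"
    and insert_top: "\<And>A c. finite A \<Longrightarrow> strict_linear_order_on (insert c A) R \<Longrightarrow> c \<notin> A \<Longrightarrow>
                        \<forall>d\<in>A. R c d \<Longrightarrow> P A \<Longrightarrow> P (insert c A)"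
  shows "P A"
  using assms(1,2)
proof (induction A rule: finite_psubset_induct)
  case (psubset A)
  show ?case
  proof (cases "A = {}")
    case True
    with empty show ?thesis by simp
  next
    case False
    then obtain c where c: "c \<in> A" "\<forall>d\<in>A. d \<noteq> c \<longrightarrow> R c d"
      using strict_linear_order_on_ex_top psubset.hyps psubset.prems by blast
    have "P (A - {c})"
      using c psubset by (intro psubset.IH) (auto intro: strict_linear_order_on_subset)
    then have "P (insert c (A - {c}))"
      using c psubset by (intro insert_top) (auto simp: insert_absorb)
    with c show ?thesis
      by (simp add: insert_absorb)
  qed
qed

section \<open>Approximate minimax strategies by multiplicative weights\<close>

lemma convex_combination_le_imp_ex_le:
  fixes \<mu> f :: "'j \<Rightarrow> real"
  assumes "finite J" and "\<forall>j\<in>J. 0 \<le> \<mu> j" and "(\<Sum>j\<in>J. \<mu> j) = 1"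
    and "(\<Sum>j\<in>J. \<mu> j * f j) \<le> b"
  shows "\<exists>j\<in>J. f j \<le> b"
proof (rule ccontr)
  assume "\<not> ?thesis"
  then have above: "\<forall>j\<in>J. b < f j"
    by auto
  obtain j0 where "j0 \<in> J" "\<mu> j0 > 0"
    using assms(2,3) sum.neutral[of J \<mu>] by (metis less_eq_real_def zero_neq_one)
  with above have "\<exists>j\<in>J. \<mu> j * b < \<mu> j * f j"
    by (auto intro: mult_strict_left_mono)
  moreover have "\<forall>j\<in>J. \<mu> j * b \<le> \<mu> j * f j"
    using above assms(2) by (simp add: mult_left_mono less_imp_le)
  ultimately have "(\<Sum>j\<in>J. \<mu> j * b) < (\<Sum>j\<in>J. \<mu> j * f j)"
    using assms(1) by (intro sum_strict_mono_ex1) auto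
  then show False
    using assms(3,4) by (simp add: sum_distrib_right[symmetric])
qed

lemma exp_mult_le_quadratic:
  fixes \<eta> y B :: real
  assumes "0 \<le> y" and "y \<le> B" and "0 < \<eta>" and "\<eta> * B \<le> 1"
  shows "exp (\<eta> * y) \<le> 1 + \<eta> * y + \<eta>\<^sup>2 * B\<^sup>2"
proof -
  have "\<eta> * y \<le> 1"
    using mult_left_mono[OF assms(2), of \<eta>] assms(3,4) by linarith
  with assms(1,3) have "exp (\<eta> * y) \<le> 1 + \<eta> * y + (\<eta> * y)\<^sup>2"
    by (intro exp_bound) auto
  moreover have "(\<eta> * y)\<^sup>2 \<le> \<eta>\<^sup>2 * B\<^sup>2"
    unfolding power_mult_distrib[symmetric] using assms(1-3) by (intro power_mono) auto
  ultimately show ?thesis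
    by linarith
qed

locale bounded_game =
  fixes X :: "'x set" and J :: "'j set" and M :: "'x \<Rightarrow> 'j \<Rightarrow> real" and B \<beta> :: real
  assumes finite_X: "finite X"
    and finite_J: "finite J" and J_ne: "J \<noteq> {}"
    and payoff_bounds: "\<And>x j. x \<in> X \<Longrightarrow> j \<in> J \<Longrightarrow> 0 \<le> M x j \<and> M x j \<le> B"
    and B_pos: "0 < B"
    and best_response: "\<And>\<mu>. \<forall>j\<in>J. 0 \<le> \<mu> j \<Longrightarrow> (\<Sum>j\<in>J. \<mu> j) = 1 \<Longrightarrow>
                                \<exists>x\<in>X. (\<Sum>j\<in>J. \<mu> j * M x j) \<le> \<beta>"
begin

text \<open>Multiplicative weights: in each round the column player mixes the columns with weights
  proportional to the exponential of their accumulated payoff, and the row player best-responds;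
  the empirical distribution of the row player's plays is nearly optimal.\<close>

definition hedge_weight :: "real \<Rightarrow> ('j \<Rightarrow> real) \<Rightarrow> 'j \<Rightarrow> real" where
  "hedge_weight \<eta> g j = exp (\<eta> * g j) / (\<Sum>i\<in>J. exp (\<eta> * g i))"

definition hedge_response :: "real \<Rightarrow> ('j \<Rightarrow> real) \<Rightarrow> 'x" where
  "hedge_response \<eta> g = (SOME x. x \<in> X \<and> (\<Sum>j\<in>J. hedge_weight \<eta> g j * M x j) \<le> \<beta>)"

primrec hedge_payoff :: "real \<Rightarrow> nat \<Rightarrow> 'j \<Rightarrow> real" where
  "hedge_payoff \<eta> 0 = (\<lambda>_. 0)"
| "hedge_payoff \<eta> (Suc t) =
     (\<lambda>j. hedge_payoff \<eta> t j + M (hedge_response \<eta> (hedge_payoff \<eta> t)) j)"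

definition hedge_play :: "real \<Rightarrow> nat \<Rightarrow> 'x" where
  "hedge_play \<eta> t = hedge_response \<eta> (hedge_payoff \<eta> t)"

definition hedge_potential :: "real \<Rightarrow> nat \<Rightarrow> real" where
  "hedge_potential \<eta> t = (\<Sum>j\<in>J. exp (\<eta> * hedge_payoff \<eta> t j))"

lemma hedge_potential_pos: "0 < hedge_potential \<eta> t"
  unfolding hedge_potential_def using finite_J J_ne by (intro sum_pos) auto

lemma hedge_response:
  "hedge_response \<eta> g \<in> X \<and> (\<Sum>j\<in>J. hedge_weight \<eta> g j * M (hedge_response \<eta> g) j) \<le> \<beta>"
proof -
  have pos: "0 < (\<Sum>i\<in>J. exp (\<eta> * g i))"
    using finite_J J_ne by (intro sum_pos) auto
  then have "\<forall>j\<in>J. 0 \<le> hedge_weight \<eta> g j" and "(\<Sum>j\<in>J. hedge_weight \<eta> g j) = 1"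
    by (simp_all add: hedge_weight_def flip: sum_divide_distrib)
  then show ?thesis
    unfolding hedge_response_def by (rule someI2_bex[OF best_response]) auto
qed

lemma hedge_play_in_X: "hedge_play \<eta> t \<in> X"
  using hedge_response by (simp add: hedge_play_def)

lemma hedge_payoff_eq_sum: "hedge_payoff \<eta> t j = (\<Sum>s<t. M (hedge_play \<eta> s) j)"
  by (induction t) (simp_all add: hedge_play_def)

lemma hedge_potential_Suc_le:
  assumes "0 < \<eta>" and "\<eta> * B \<le> 1"
  shows "hedge_potential \<eta> (Suc t) \<le> hedge_potential \<eta> t * exp (\<eta> * \<beta> + \<eta>\<^sup>2 * B\<^sup>2)"
proof -
  define x where "x = hedge_play \<eta> t"
  define w where "w j = exp (\<eta> * hedge_payoff \<eta> t j)" for j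
  define \<Phi> where "\<Phi> = hedge_potential \<eta> t"
  have x: "x \<in> X" and "(\<Sum>j\<in>J. w j / \<Phi> * M x j) \<le> \<beta>"
    using hedge_response[of \<eta> "hedge_payoff \<eta> t"]
    by (simp_all add: x_def w_def \<Phi>_def hedge_play_def hedge_weight_def hedge_potential_def)
  then have weighted: "(\<Sum>j\<in>J. w j * M x j) \<le> \<Phi> * \<beta>"
    using hedge_potential_pos[of \<eta> t]
    by (simp add: \<Phi>_def sum_divide_distrib[symmetric] pos_divide_le_eq mult.commute)
  have "hedge_potential \<eta> (Suc t) = (\<Sum>j\<in>J. w j * exp (\<eta> * M x j))"
    by (simp add: hedge_potential_def w_def x_def hedge_play_def distrib_left exp_add)
  also have "\<dots> \<le> (\<Sum>j\<in>J. w j * (1 + \<eta> * M x j + \<eta>\<^sup>2 * B\<^sup>2))"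
  proof (intro sum_mono mult_left_mono)
    fix j assume "j \<in> J"
    with payoff_bounds x assms show "exp (\<eta> * M x j) \<le> 1 + \<eta> * M x j + \<eta>\<^sup>2 * B\<^sup>2"
      by (intro exp_mult_le_quadratic) auto
  qed (simp add: w_def)
  also have "\<dots> = \<Phi> * (1 + \<eta>\<^sup>2 * B\<^sup>2) + \<eta> * (\<Sum>j\<in>J. w j * M x j)"
    by (simp add: \<Phi>_def hedge_potential_def w_def algebra_simps sum.distrib
        sum_distrib_left sum_distrib_right)
  also have "\<dots> \<le> \<Phi> * (1 + (\<eta> * \<beta> + \<eta>\<^sup>2 * B\<^sup>2))"
    using assms mult_left_mono[OF weighted, of \<eta>] by (simp add: algebra_simps)
  also have "\<dots> \<le> \<Phi> * exp (\<eta> * \<beta> + \<eta>\<^sup>2 * B\<^sup>2)"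
    using hedge_potential_pos[of \<eta> t] by (simp add: \<Phi>_def)
  finally show ?thesis
    by (simp add: \<Phi>_def)
qed

lemma hedge_potential_le:
  assumes "0 < \<eta>" and "\<eta> * B \<le> 1"
  shows "hedge_potential \<eta> t \<le> card J * exp (t * (\<eta> * \<beta> + \<eta>\<^sup>2 * B\<^sup>2))"
proof (induction t)
  case 0
  then show ?case
    by (simp add: hedge_potential_def)
next
  case (Suc t)
  have "hedge_potential \<eta> (Suc t) \<le> hedge_potential \<eta> t * exp (\<eta> * \<beta> + \<eta>\<^sup>2 * B\<^sup>2)"
    using assms by (rule hedge_potential_Suc_le)
  also have "\<dots> \<le> card J * exp (t * (\<eta> * \<beta> + \<eta>\<^sup>2 * B\<^sup>2)) * exp (\<eta> * \<beta> + \<eta>\<^sup>2 * B\<^sup>2)"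
    using Suc by (intro mult_right_mono) auto
  finally show ?case
    by (simp add: mult.assoc exp_add[symmetric] algebra_simps)
qed

lemma hedge_average_payoff_le:
  assumes "0 < \<eta>" and "\<eta> * B \<le> 1" and "0 < t" and "j \<in> J"
  shows "hedge_payoff \<eta> t j / t \<le> \<beta> + \<eta> * B\<^sup>2 + ln (card J) / (\<eta> * t)"
proof -
  have "exp (\<eta> * hedge_payoff \<eta> t j) \<le> hedge_potential \<eta> t"
    unfolding hedge_potential_def using finite_J assms(4) by (intro member_le_sum) auto
  also have "\<dots> \<le> card J * exp (t * (\<eta> * \<beta> + \<eta>\<^sup>2 * B\<^sup>2))"
    using assms(1,2) by (rule hedge_potential_le)
  finally have "\<eta> * hedge_payoff \<eta> t j \<le> ln (card J) + t * (\<eta> * \<beta> + \<eta>\<^sup>2 * B\<^sup>2)"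
    using finite_J J_ne
    by (simp add: ln_mult ln_le_cancel_iff[symmetric] card_gt_0_iff del: ln_le_cancel_iff)
  with assms(1,3) show ?thesis
    by (simp add: field_simps power2_eq_square)
qed

theorem approx_minimax:
  assumes "0 < \<epsilon>"
  shows "\<exists>p. (\<forall>x\<in>X. 0 \<le> p x) \<and> (\<Sum>x\<in>X. p x) = 1 \<and>
             (\<forall>j\<in>J. (\<Sum>x\<in>X. p x * M x j) \<le> \<beta> + \<epsilon>)"
proof -
  define \<eta> where "\<eta> = min (1 / B) (\<epsilon> / (2 * B\<^sup>2))"
  have \<eta>: "0 < \<eta>" "\<eta> * B \<le> 1" "\<eta> * B\<^sup>2 \<le> \<epsilon> / 2"
    using B_pos assms by (auto simp: \<eta>_def min_def field_simps)
  obtain T0 :: nat where T0: "2 * ln (card J) / (\<eta> * \<epsilon>) < T0"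
    using reals_Archimedean2 by blast
  define T where "T = Suc T0"
  have T: "2 * ln (card J) / (\<eta> * \<epsilon>) < T"
    using T0 by (simp add: T_def)
  have T_pos: "0 < T"
    by (simp add: T_def)
  define p where "p x = (\<Sum>s<T. if hedge_play \<eta> s = x then 1 else 0) / T" for x
  show ?thesis
  proof (intro exI conjI ballI)
    show "0 \<le> p x" for x
      by (simp add: p_def sum_nonneg)
    have "(\<Sum>x\<in>X. p x) = (\<Sum>s<T. \<Sum>x\<in>X. if hedge_play \<eta> s = x then 1 else 0) / T"
      by (simp add: p_def sum.swap[of _ X] flip: sum_divide_distrib)
    also have "\<dots> = 1"
      using hedge_play_in_X finite_X T_pos by (simp add: sum.delta)
    finally show "(\<Sum>x\<in>X. p x) = 1" .
    fix j assume "j \<in> J"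
    have "(\<Sum>x\<in>X. p x * M x j) =
          (\<Sum>s<T. \<Sum>x\<in>X. if hedge_play \<eta> s = x then M x j else 0) / T"
      by (simp add: p_def sum.swap[of _ X] sum_distrib_right if_distrib[where f="\<lambda>z. z * _"]
          flip: sum_divide_distrib cong: if_cong)
    also have "\<dots> = hedge_payoff \<eta> T j / T"
      using hedge_play_in_X finite_X by (simp add: sum.delta hedge_payoff_eq_sum)
    also have "\<dots> \<le> \<beta> + \<eta> * B\<^sup>2 + ln (card J) / (\<eta> * T)"
      using \<eta>(1,2) T_pos \<open>j \<in> J\<close> by (rule hedge_average_payoff_le)
    also have "ln (card J) / (\<eta> * T) \<le> \<epsilon> / 2"
      using T T_pos \<eta>(1) assms by (simp add: field_simps)
    finally show "(\<Sum>x\<in>X. p x * M x j) \<le> \<beta> + \<epsilon>"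
      using \<eta>(3) by linarith
  qed
qed

end

section \<open>The challenge game\<close>

lemma sum_asym_pairs_le_half_square:
  fixes \<mu> :: "'j \<Rightarrow> real"
  assumes "finite K" and "\<forall>j\<in>K. 0 \<le> \<mu> j"
    and asym: "\<And>j j'. j \<in> K \<Longrightarrow> j' \<in> K \<Longrightarrow> Q j j' \<Longrightarrow> \<not> Q j' j"
  shows "(\<Sum>j\<in>K. \<Sum>j'\<in>K. \<mu> j * \<mu> j' * of_bool (Q j j')) \<le> (\<Sum>j\<in>K. \<mu> j)\<^sup>2 / 2"
proof -
  let ?P = "\<lambda>Q. \<Sum>j\<in>K. \<Sum>j'\<in>K. \<mu> j * \<mu> j' * of_bool (Q j j')"
  have "?P Q = ?P (\<lambda>j j'. Q j' j)"
    by (subst sum.swap) (simp add: mult.commute)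
  then have "2 * ?P Q = ?P Q + ?P (\<lambda>j j'. Q j' j)"
    by simp
  also have "\<dots> = (\<Sum>j\<in>K. \<Sum>j'\<in>K. \<mu> j * \<mu> j' * (of_bool (Q j j') + of_bool (Q j' j)))"
    by (simp add: sum.distrib[symmetric] algebra_simps)
  also have "\<dots> \<le> (\<Sum>j\<in>K. \<Sum>j'\<in>K. \<mu> j * \<mu> j')"
    using assms(2) asym by (intro sum_mono) auto
  also have "\<dots> = (\<Sum>j\<in>K. \<mu> j)\<^sup>2"
    by (simp add: power2_eq_square sum_product)
  finally show ?thesis
    by simp
qed

lemma sum_asym_pairs_from_subset_le:
  fixes \<mu> :: "'j \<Rightarrow> real"
  assumes "finite J" and "\<forall>j\<in>J. 0 \<le> \<mu> j" and "(\<Sum>j\<in>J. \<mu> j) = 1" and "K \<subseteq> J"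
    and asym: "\<And>j j'. j \<in> K \<Longrightarrow> j' \<in> K \<Longrightarrow> Q j j' \<Longrightarrow> \<not> Q j' j"
  shows "(\<Sum>j\<in>K. \<Sum>j'\<in>J. \<mu> j * \<mu> j' * of_bool (Q j j'))
           \<le> (\<Sum>j\<in>K. \<mu> j) - (\<Sum>j\<in>K. \<mu> j)\<^sup>2 / 2"
proof -
  define s where "s = (\<Sum>j\<in>K. \<mu> j)"
  have fin: "finite K"
    using assms(1,4) finite_subset by blast
  have split: "(\<Sum>j'\<in>J. g j') = (\<Sum>j'\<in>K. g j') + (\<Sum>j'\<in>J - K. g j')" for g :: "'j \<Rightarrow> real"
    using sum.subset_diff[OF assms(4,1), of g] by simp
  have "(\<Sum>j\<in>K. \<Sum>j'\<in>J. \<mu> j * \<mu> j' * of_bool (Q j j'))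
      = (\<Sum>j\<in>K. \<Sum>j'\<in>K. \<mu> j * \<mu> j' * of_bool (Q j j'))
      + (\<Sum>j\<in>K. \<Sum>j'\<in>J - K. \<mu> j * \<mu> j' * of_bool (Q j j'))"
    by (simp only: split sum.distrib)
  also have "(\<Sum>j\<in>K. \<Sum>j'\<in>K. \<mu> j * \<mu> j' * of_bool (Q j j')) \<le> s\<^sup>2 / 2"
    unfolding s_def using fin assms(2,4) asym by (intro sum_asym_pairs_le_half_square) auto
  also have "(\<Sum>j\<in>K. \<Sum>j'\<in>J - K. \<mu> j * \<mu> j' * of_bool (Q j j'))
      \<le> (\<Sum>j\<in>K. \<Sum>j'\<in>J - K. \<mu> j * \<mu> j')"
    using assms(2,4) by (intro sum_mono) (auto intro: mult_nonneg_nonneg)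
  also have "\<dots> = s * (\<Sum>j'\<in>J - K. \<mu> j')"
    by (simp add: s_def sum_product)
  also have "\<dots> = s * (1 - s)"
    using split[of \<mu>] assms(3) by (simp add: s_def)
  finally show ?thesis
    by (simp add: s_def power2_eq_square algebra_simps)
qed

definition challenges :: "'v set \<Rightarrow> 'c set \<Rightarrow> nat \<Rightarrow> ('c \<times> 'v set) set" where
  "challenges V C r = {(a, W). a \<in> C \<and> W \<subseteq> V \<and> card W = r}"

definition challenge_payoff :: "('v \<Rightarrow> 'c \<Rightarrow> 'c \<Rightarrow> bool) \<Rightarrow> 'c \<Rightarrow> 'c \<times> 'v set \<Rightarrow> real" where
  "challenge_payoff pref c j = real (card {v \<in> snd j. pref v (fst j) c})"

lemma challenge_payoff_eq_sum:
  assumes "finite V" and "snd j \<subseteq> V"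
  shows "challenge_payoff pref c j = (\<Sum>v\<in>{v\<in>V. v \<in> snd j}. of_bool (pref v (fst j) c))"
proof -
  have "{v\<in>V. v \<in> snd j} \<inter> {v. pref v (fst j) c} = {v \<in> snd j. pref v (fst j) c}"
    using assms(2) by auto
  then show ?thesis
    using assms(1) by (simp add: challenge_payoff_def)
qed

lemma finite_challenges:
  assumes "finite V" and "finite C"
  shows "finite (challenges V C r)"
proof (rule finite_subset)
  show "challenges V C r \<subseteq> C \<times> Pow V"
    by (auto simp: challenges_def)
qed (use assms in auto)

lemma challenges_nonempty:
  assumes "C \<noteq> {}" and "r \<le> card V"
  shows "challenges V C r \<noteq> {}"
proof -
  obtain a where "a \<in> C"
    using assms(1) by blast
  moreover obtain W where "W \<subseteq> V" "card W = r"
    using assms(2) by (meson obtain_subset_with_card_n)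
  ultimately show ?thesis
    by (auto simp: challenges_def)
qed

lemma sum_minus_half_squares_le:
  fixes s :: "'v \<Rightarrow> real"
  assumes "finite V" and "V \<noteq> {}" and sum_s: "(\<Sum>v\<in>V. s v) = r"
  shows "(\<Sum>v\<in>V. s v - (s v)\<^sup>2 / 2) \<le> r - r\<^sup>2 / (2 * real (card V))"
proof -
  have "r\<^sup>2 \<le> (\<Sum>v\<in>V. (s v)\<^sup>2) * card V"
    using sum_squared_le_sum_of_squares[of s V] by (simp only: sum_s)
  moreover have "0 < real (card V)"
    using assms(1,2) by (simp add: card_gt_0_iff)
  ultimately have "r\<^sup>2 / (2 * real (card V)) \<le> (\<Sum>v\<in>V. (s v)\<^sup>2) / 2"
    by (simp add: pos_divide_le_eq)
  moreover have "(\<Sum>v\<in>V. s v - (s v)\<^sup>2 / 2) = r - (\<Sum>v\<in>V. (s v)\<^sup>2) / 2"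
    by (simp only: sum_subtractf sum_s sum_divide_distrib)
  ultimately show ?thesis
    by linarith
qed

lemma sum_challenges_containing:
  fixes \<mu> :: "'c \<times> 'v set \<Rightarrow> real"
  assumes "finite V" and "finite C"
  shows "(\<Sum>v\<in>V. \<Sum>j\<in>{j \<in> challenges V C r. v \<in> snd j}. \<mu> j)
           = r * (\<Sum>j\<in>challenges V C r. \<mu> j)"
proof -
  have "(\<Sum>v\<in>V. \<Sum>j\<in>{j \<in> challenges V C r. v \<in> snd j}. \<mu> j)
      = (\<Sum>j\<in>challenges V C r. \<Sum>v\<in>{v\<in>V. v \<in> snd j}. \<mu> j)"
    using assms by (intro sum.swap_restrict finite_challenges)
  also have "\<dots> = (\<Sum>j\<in>challenges V C r. r * \<mu> j)"
  proof (intro sum.cong refl)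
    fix j assume "j \<in> challenges V C r"
    then have "{v\<in>V. v \<in> snd j} = snd j" and "card (snd j) = r"
      by (auto simp: challenges_def)
    then show "(\<Sum>v\<in>{v\<in>V. v \<in> snd j}. \<mu> j) = r * \<mu> j"
      by simp
  qed
  finally show ?thesis
    by (simp add: sum_distrib_left)
qed

lemma challenge_self_play_le:
  fixes pref :: "'v \<Rightarrow> 'c \<Rightarrow> 'c \<Rightarrow> bool"
  assumes elect: "election V C pref"
    and \<mu>: "\<forall>j\<in>challenges V C r. 0 \<le> \<mu> j" "(\<Sum>j\<in>challenges V C r. \<mu> j) = 1"
  shows "(\<Sum>j'\<in>challenges V C r. \<mu> j' *
            (\<Sum>j\<in>challenges V C r. \<mu> j * challenge_payoff pref (fst j') j))
           \<le> real r - (real r)\<^sup>2 / (2 * real (card V))"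
proof -
  define J where "J = challenges V C r"
  define K where "K v = {j \<in> J. v \<in> snd j}" for v
  define s where "s v = (\<Sum>j\<in>K v. \<mu> j)" for v
  have V: "finite V" "V \<noteq> {}" and "finite C"
    and lin: "\<And>v. v \<in> V \<Longrightarrow> strict_linear_order_on C (pref v)"
    using elect by (auto simp: election_def)
  then have "finite J"
    by (simp add: J_def finite_challenges)
  have J: "fst j \<in> C" "snd j \<subseteq> V" if "j \<in> J" for j
    using that by (auto simp: J_def challenges_def)
  have payoff: "challenge_payoff pref c j = (\<Sum>v\<in>{v\<in>V. v \<in> snd j}. of_bool (pref v (fst j) c))"
    if "j \<in> J" for j c
    using V(1) J(2)[OF that] by (rule challenge_payoff_eq_sum)
  have "(\<Sum>j'\<in>J. \<mu> j' * (\<Sum>j\<in>J. \<mu> j * challenge_payoff pref (fst j') j))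
      = (\<Sum>j'\<in>J. \<Sum>j\<in>J. \<Sum>v\<in>{v\<in>V. v \<in> snd j}. \<mu> j * \<mu> j' * of_bool (pref v (fst j) (fst j')))"
    by (intro sum.cong refl) (simp add: payoff sum_distrib_left mult_ac)
  also have "\<dots> = (\<Sum>j\<in>J. \<Sum>v\<in>{v\<in>V. v \<in> snd j}. \<Sum>j'\<in>J. \<mu> j * \<mu> j' * of_bool (pref v (fst j) (fst j')))"
    by (subst sum.swap) (intro sum.cong refl sum.swap)
  also have "\<dots> = (\<Sum>v\<in>V. \<Sum>j\<in>K v. \<Sum>j'\<in>J. \<mu> j * \<mu> j' * of_bool (pref v (fst j) (fst j')))"
    unfolding K_def using \<open>finite J\<close> V(1) by (rule sum.swap_restrict)
  also have "\<dots> \<le> (\<Sum>v\<in>V. s v - (s v)\<^sup>2 / 2)"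
  proof (rule sum_mono)
    fix v assume "v \<in> V"
    show "(\<Sum>j\<in>K v. \<Sum>j'\<in>J. \<mu> j * \<mu> j' * of_bool (pref v (fst j) (fst j'))) \<le> s v - (s v)\<^sup>2 / 2"
      unfolding s_def using \<open>finite J\<close> \<mu> J(1) strict_linear_order_on_asym[OF lin[OF \<open>v \<in> V\<close>]]
      by (intro sum_asym_pairs_from_subset_le) (auto simp: J_def K_def)
  qed
  also have "\<dots> \<le> real r - (real r)\<^sup>2 / (2 * real (card V))"
  proof (rule sum_minus_half_squares_le[OF V])
    show "(\<Sum>v\<in>V. s v) = real r"
      using sum_challenges_containing[OF V(1) \<open>finite C\<close>, where r = r and \<mu> = \<mu>] \<mu>(2)
      by (simp add: s_def K_def J_def)
  qed
  finally show ?thesis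
    unfolding J_def .
qed

lemma challenge_best_response:
  fixes pref :: "'v \<Rightarrow> 'c \<Rightarrow> 'c \<Rightarrow> bool"
  assumes elect: "election V C pref"
    and \<mu>: "\<forall>j\<in>challenges V C r. 0 \<le> \<mu> j" "(\<Sum>j\<in>challenges V C r. \<mu> j) = 1"
  shows "\<exists>c\<in>C. (\<Sum>j\<in>challenges V C r. \<mu> j * challenge_payoff pref c j)
                  \<le> real r - (real r)\<^sup>2 / (2 * real (card V))"
proof -
  have "finite (challenges V C r)"
    using elect by (auto simp: election_def intro: finite_challenges)
  then obtain j' where "j' \<in> challenges V C r"
    and "(\<Sum>j\<in>challenges V C r. \<mu> j * challenge_payoff pref (fst j') j)
           \<le> real r - (real r)\<^sup>2 / (2 * real (card V))"
    using convex_combination_le_imp_ex_le[OF _ \<mu> challenge_self_play_le[OF elect \<mu>]] by blast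
  then show ?thesis
    by (auto simp: challenges_def)
qed

section \<open>Rounding a lottery to a committee\<close>

definition mass_below :: "'c set \<Rightarrow> ('c \<Rightarrow> 'c \<Rightarrow> bool) \<Rightarrow> ('c \<Rightarrow> real) \<Rightarrow> 'c \<Rightarrow> real" where
  "mass_below C R p c = (\<Sum>d\<in>{d\<in>C. R c d}. p d)"

text \<open>Laying out the candidates on [0, 1] from the bottom of the order R upwards, c occupies
  the interval [mass_below c, mass_below c + p c]; its clipped mass is the length of the part
  of that interval below L.\<close>

definition clipped_mass :: "'c set \<Rightarrow> ('c \<Rightarrow> 'c \<Rightarrow> bool) \<Rightarrow> ('c \<Rightarrow> real) \<Rightarrow> real \<Rightarrow> 'c \<Rightarrow> real" where
  "clipped_mass C R p L c = max 0 (min (mass_below C R p c + p c) L - mass_below C R p c)"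

definition above_all :: "'c set \<Rightarrow> ('c \<Rightarrow> 'c \<Rightarrow> bool) \<Rightarrow> 'c set \<Rightarrow> 'c set" where
  "above_all C R S = {c\<in>C. \<forall>s\<in>S. R c s}"

lemma above_all_antimono: "S \<subseteq> S' \<Longrightarrow> above_all C R S' \<subseteq> above_all C R S"
  by (auto simp: above_all_def)

lemma mass_below_insert_top:
  assumes "strict_linear_order_on (insert c A) R" and "finite A" and "c \<notin> A" and "\<forall>d\<in>A. R c d"
  shows "mass_below (insert c A) R p c = sum p A"
    and "d \<in> A \<Longrightarrow> mass_below (insert c A) R p d = mass_below A R p d"
proof -
  show "mass_below (insert c A) R p c = sum p A"
    using assms unfolding mass_below_def strict_linear_order_on_def
    by (intro sum.cong) auto
  assume "d \<in> A"
  then have "\<not> R d c"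
    using assms strict_linear_order_on_asym[OF assms(1)] by blast
  then show "mass_below (insert c A) R p d = mass_below A R p d"
    unfolding mass_below_def by (intro sum.cong) auto
qed

lemma clipped_mass_le: "0 \<le> p c \<Longrightarrow> clipped_mass C R p L c \<le> p c"
  by (simp add: clipped_mass_def)

lemma sum_clipped_mass:
  assumes "finite A" and "strict_linear_order_on A R" and "\<forall>c\<in>A. 0 \<le> p c" and "0 \<le> L"
  shows "(\<Sum>c\<in>A. clipped_mass A R p L c) = min (sum p A) L"
  using assms
proof (induction A rule: strict_linear_order_on_top_induct)
  case empty
  then show ?case by simp
next
  case (insert_top A c)
  have "(\<Sum>d\<in>insert c A. clipped_mass (insert c A) R p L d)
      = clipped_mass (insert c A) R p L c + (\<Sum>d\<in>A. clipped_mass A R p L d)"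
    using insert_top mass_below_insert_top[OF insert_top(2,1,3,4)]
    by (simp add: clipped_mass_def)
  also have "\<dots> = max 0 (min (sum p A + p c) L - sum p A) + min (sum p A) L"
    using insert_top mass_below_insert_top[OF insert_top(2,1,3,4)]
    by (simp add: clipped_mass_def)
  also have "\<dots> = min (sum p (insert c A)) L"
    using insert_top by (simp add: max_def min_def)
  finally show ?case .
qed

lemma power_Suc_ge_tangent:
  fixes u w :: real
  assumes "0 \<le> u" and "u \<le> w"
  shows "u ^ (k + 1) + (real k + 1) * (w - u) * u ^ k \<le> w ^ (k + 1)"
proof -
  have "(w - u) * ((real k + 1) * u ^ k) = (w - u) * (\<Sum>i<Suc k. u ^ i * u ^ (k - i))"
    by (simp add: power_add[symmetric])
  also have "\<dots> \<le> (w - u) * (\<Sum>i<Suc k. w ^ i * u ^ (k - i))"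
    using assms by (intro mult_left_mono sum_mono mult_right_mono power_mono) auto
  also have "\<dots> = w ^ Suc k - u ^ Suc k"
    by (rule diff_power_eq_sum[symmetric])
  finally show ?thesis
    by (simp add: algebra_simps)
qed

text \<open>The clipped intervals tile [0, min (sum p A) L] and mass_below c is the left end of the
  interval of c, so the left-hand side is a lower Riemann sum for the integral of x^k over it.\<close>

lemma sum_clipped_mass_power_le:
  assumes "finite A" and "strict_linear_order_on A R" and "\<forall>c\<in>A. 0 \<le> p c" and "0 \<le> L"
  shows "(\<Sum>c\<in>A. clipped_mass A R p L c * mass_below A R p c ^ k)
           \<le> min (sum p A) L ^ (k + 1) / (real k + 1)"
  using assms
proof (induction A rule: strict_linear_order_on_top_induct)
  case empty
  then show ?case by simp
next
  case (insert_top A c)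
  define M where "M = sum p A"
  have "0 \<le> M" "0 \<le> p c"
    using insert_top by (auto simp: M_def intro: sum_nonneg)
  have "(\<Sum>d\<in>insert c A. clipped_mass (insert c A) R p L d * mass_below (insert c A) R p d ^ k)
      = max 0 (min (M + p c) L - M) * M ^ k
        + (\<Sum>d\<in>A. clipped_mass A R p L d * mass_below A R p d ^ k)"
    using insert_top mass_below_insert_top[OF insert_top(2,1,3,4)]
    by (simp add: clipped_mass_def M_def)
  also have "\<dots> \<le> max 0 (min (M + p c) L - M) * M ^ k + min M L ^ (k + 1) / (real k + 1)"
    using insert_top by (simp add: M_def)
  also have "\<dots> \<le> min (M + p c) L ^ (k + 1) / (real k + 1)"
  proof (cases "L \<le> M")
    case True
    with \<open>0 \<le> p c\<close> show ?thesis by (simp add: min_def)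
  next
    case False
    define N where "N = min (M + p c) L"
    have "M \<le> N"
      using False \<open>0 \<le> p c\<close> by (simp add: N_def)
    have "(N - M) * M ^ k + M ^ (k + 1) / (real k + 1)
        = (M ^ (k + 1) + (real k + 1) * (N - M) * M ^ k) / (real k + 1)"
      by (simp add: field_simps)
    also have "\<dots> \<le> N ^ (k + 1) / (real k + 1)"
      using power_Suc_ge_tangent[OF \<open>0 \<le> M\<close> \<open>M \<le> N\<close>, of k]
      by (intro divide_right_mono) (simp_all add: add.commute)
    finally show ?thesis
      using False \<open>M \<le> N\<close> by (simp add: N_def[symmetric])
  qed
  finally show ?case
    using insert_top by (simp add: M_def add.commute)
qed

lemma mass_below_ge_if_above_all:
  assumes "finite C" and "\<forall>c\<in>C. 0 \<le> p c" and "sum p C = 1"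
    and lin: "strict_linear_order_on C R" and "S \<subseteq> C" and "a \<in> above_all C R S"
  shows "1 - sum p (above_all C R S) \<le> mass_below C R p a"
proof -
  have "C - above_all C R S \<subseteq> {d\<in>C. R a d}"
  proof
    fix c assume c: "c \<in> C - above_all C R S"
    then obtain s where s: "s \<in> S" "\<not> R c s"
      by (auto simp: above_all_def)
    have "a \<in> C" "\<forall>s\<in>S. R a s"
      using assms(6) by (auto simp: above_all_def)
    then have "R a c"
    proof (cases "c = s")
      case False
      with s c assms(5) lin have "R s c"
        unfolding strict_linear_order_on_def by blast
      with s c \<open>a \<in> C\<close> \<open>\<forall>s\<in>S. R a s\<close> assms(5) lin show "R a c"
        unfolding strict_linear_order_on_def by blast
    qed (use s in auto)
    with c show "c \<in> {d\<in>C. R a d}"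
      by simp
  qed
  then have "sum p (C - above_all C R S) \<le> mass_below C R p a"
    unfolding mass_below_def using assms(1,2) by (intro sum_mono2) auto
  moreover have "sum p C = sum p (above_all C R S) + sum p (C - above_all C R S)"
    using assms(1) sum.subset_diff[of "above_all C R S" C p] by (auto simp: above_all_def)
  ultimately show ?thesis
    using assms(3) by linarith
qed

lemma mass_le_clipped_mass:
  assumes "finite C" and p: "\<forall>c\<in>C. 0 \<le> p c" "sum p C = 1"
    and "strict_linear_order_on C R" and "T \<subseteq> C" and "0 \<le> t" "t \<le> 1"
  shows "sum p T \<le> t + (\<Sum>c\<in>T. clipped_mass C R p (1 - t) c)"
proof -
  have "(\<Sum>c\<in>T. p c - clipped_mass C R p (1 - t) c) \<le> (\<Sum>c\<in>C. p c - clipped_mass C R p (1 - t) c)"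
    using assms(1,5) p by (intro sum_mono2) (auto simp: clipped_mass_le)
  also have "\<dots> = sum p C - min (sum p C) (1 - t)"
    using assms by (simp only: sum_subtractf sum_clipped_mass)
  also have "\<dots> = t"
    using assms by simp
  finally show ?thesis
    by (simp only: sum_subtractf)
qed

lemma sum_tuples_sum_above_all:
  fixes p g :: "'c \<Rightarrow> real"
  assumes "finite C"
  shows "(\<Sum>f\<in>PiE {..<k} (\<lambda>_. C). (\<Prod>i<k. p (f i)) * sum g (above_all C R (f ` {..<k})))
       = (\<Sum>c\<in>C. g c * mass_below C R p c ^ k)"
proof -
  let ?F = "PiE {..<k} (\<lambda>_. C)"
  have "(\<Sum>f\<in>?F. (\<Prod>i<k. p (f i)) * sum g (above_all C R (f ` {..<k})))
      = (\<Sum>f\<in>?F. \<Sum>c\<in>C. if \<forall>i<k. R c (f i) then g c * (\<Prod>i<k. p (f i)) else 0)"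
  proof (intro sum.cong refl)
    fix f
    have "above_all C R (f ` {..<k}) = {c\<in>C. \<forall>i<k. R c (f i)}"
      by (auto simp: above_all_def)
    then show "(\<Prod>i<k. p (f i)) * sum g (above_all C R (f ` {..<k}))
        = (\<Sum>c\<in>C. if \<forall>i<k. R c (f i) then g c * (\<Prod>i<k. p (f i)) else 0)"
      using assms by (simp add: sum.inter_filter sum_distrib_left if_distrib mult.commute cong: if_cong)
  qed
  also have "\<dots> = (\<Sum>c\<in>C. \<Sum>f\<in>?F. if \<forall>i<k. R c (f i) then g c * (\<Prod>i<k. p (f i)) else 0)"
    by (rule sum.swap)
  also have "\<dots> = (\<Sum>c\<in>C. g c * mass_below C R p c ^ k)"
  proof (intro sum.cong refl)
    fix c
    have "{f \<in> ?F. \<forall>i<k. R c (f i)} = PiE {..<k} (\<lambda>_. {d\<in>C. R c d})"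
      by (auto simp: PiE_def Pi_def)
    then have "(\<Sum>f\<in>?F. if \<forall>i<k. R c (f i) then g c * (\<Prod>i<k. p (f i)) else 0)
        = g c * (\<Sum>f\<in>PiE {..<k} (\<lambda>_. {d\<in>C. R c d}). \<Prod>i<k. p (f i))"
      using assms by (simp add: sum.inter_filter[symmetric] finite_PiE sum_distrib_left)
    also have "\<dots> = g c * (\<Prod>i<k. \<Sum>d\<in>{d\<in>C. R c d}. p d)"
      using assms by (subst prod_sum_PiE) auto
    also have "\<dots> = g c * mass_below C R p c ^ k"
      by (simp add: mass_below_def)
    finally show "(\<Sum>f\<in>?F. if \<forall>i<k. R c (f i) then g c * (\<Prod>i<k. p (f i)) else 0)
        = g c * mass_below C R p c ^ k" .
  qed
  finally show ?thesis .
qed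

lemma mass_below_ge_clipped_mass_above:
  assumes "finite C" and p: "\<forall>c\<in>C. 0 \<le> p c" "sum p C = 1" and lin: "strict_linear_order_on C R"
    and "S0 \<subseteq> S" and "S \<subseteq> C" and "a \<in> above_all C R S" and "0 \<le> t" "t \<le> 1"
  shows "(1 - t) - sum (clipped_mass C R p (1 - t)) (above_all C R S0) \<le> mass_below C R p a"
proof -
  have "1 - sum p (above_all C R S) \<le> mass_below C R p a"
    using assms(1) p lin assms(6,7) by (rule mass_below_ge_if_above_all)
  moreover have "sum p (above_all C R S) \<le> sum p (above_all C R S0)"
    using above_all_antimono[OF assms(5)] p(1) assms(1)
    by (intro sum_mono2) (auto simp: above_all_def)
  moreover have "sum p (above_all C R S0) \<le> t + sum (clipped_mass C R p (1 - t)) (above_all C R S0)"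
    using assms(1) p lin _ assms(8,9) by (rule mass_le_clipped_mass) (auto simp: above_all_def)
  ultimately show ?thesis
    by linarith
qed

lemma exists_tuple_small_clipped_mass_above:
  fixes pref :: "'v \<Rightarrow> 'c \<Rightarrow> 'c \<Rightarrow> bool" and p :: "'c \<Rightarrow> real" and L :: real
  assumes elect: "election V C pref" and p: "\<forall>c\<in>C. 0 \<le> p c" "sum p C = 1"
    and "0 \<le> L" "L \<le> 1"
  shows "\<exists>f\<in>PiE {..<k} (\<lambda>_. C).
           (\<Sum>v\<in>V. sum (clipped_mass C (pref v) p L) (above_all C (pref v) (f ` {..<k})))
             \<le> card V * L ^ (k + 1) / (real k + 1)"
proof -
  let ?F = "PiE {..<k} (\<lambda>_. C)"
  let ?excess = "\<lambda>v f. sum (clipped_mass C (pref v) p L) (above_all C (pref v) (f ` {..<k}))"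
  define \<mu> where "\<mu> f = (\<Prod>i<k. p (f i))" for f
  have "finite C" and lin: "\<And>v. v \<in> V \<Longrightarrow> strict_linear_order_on C (pref v)"
    using elect by (auto simp: election_def)
  have \<mu>_nonneg: "\<forall>f\<in>?F. 0 \<le> \<mu> f"
    using p by (auto simp: \<mu>_def PiE_def intro!: prod_nonneg)
  have \<mu>_sum: "(\<Sum>f\<in>?F. \<mu> f) = 1"
    using \<open>finite C\<close> p prod_sum_PiE[of "{..<k}" "\<lambda>_. C" "\<lambda>_. p"] by (simp add: \<mu>_def)
  have "(\<Sum>f\<in>?F. \<mu> f * (\<Sum>v\<in>V. ?excess v f)) = (\<Sum>v\<in>V. \<Sum>f\<in>?F. \<mu> f * ?excess v f)"
    by (simp only: sum_distrib_left) (rule sum.swap)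
  also have "\<dots> = (\<Sum>v\<in>V. \<Sum>c\<in>C. clipped_mass C (pref v) p L c * mass_below C (pref v) p c ^ k)"
    using \<open>finite C\<close> by (simp only: \<mu>_def sum_tuples_sum_above_all)
  also have "\<dots> \<le> (\<Sum>v\<in>V. L ^ (k + 1) / (real k + 1))"
  proof (rule sum_mono)
    fix v assume "v \<in> V"
    have "(\<Sum>c\<in>C. clipped_mass C (pref v) p L c * mass_below C (pref v) p c ^ k)
        \<le> min (sum p C) L ^ (k + 1) / (real k + 1)"
      using \<open>finite C\<close> lin[OF \<open>v \<in> V\<close>] p(1) assms(4) by (rule sum_clipped_mass_power_le)
    with p assms(5) show "(\<Sum>c\<in>C. clipped_mass C (pref v) p L c * mass_below C (pref v) p c ^ k)
        \<le> L ^ (k + 1) / (real k + 1)"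
      by simp
  qed
  also have "\<dots> = card V * L ^ (k + 1) / (real k + 1)"
    by simp
  finally show ?thesis
    using \<open>finite C\<close> \<mu>_nonneg \<mu>_sum by (intro convex_combination_le_imp_ex_le) (auto simp: finite_PiE)
qed

lemma exists_committee_large_mass_below:
  fixes pref :: "'v \<Rightarrow> 'c \<Rightarrow> 'c \<Rightarrow> bool" and p :: "'c \<Rightarrow> real" and t :: real
  assumes elect: "election V C pref" and "k \<le> card C"
    and p: "\<forall>c\<in>C. 0 \<le> p c" "sum p C = 1" and "0 \<le> t" "t \<le> 1"
  shows "\<exists>S. S \<subseteq> C \<and> card S = k \<and> (\<forall>a\<in>C. \<forall>W\<subseteq>prefer_set V pref a S.
           card W * (1 - t) - card V * (1 - t) ^ (k + 1) / (real k + 1)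
             \<le> (\<Sum>v\<in>W. mass_below C (pref v) p a))"
proof -
  have "finite C" "finite V" and lin: "\<And>v. v \<in> V \<Longrightarrow> strict_linear_order_on C (pref v)"
    using elect by (auto simp: election_def)
  obtain f where f: "f \<in> PiE {..<k} (\<lambda>_. C)"
    and small: "(\<Sum>v\<in>V. sum (clipped_mass C (pref v) p (1 - t)) (above_all C (pref v) (f ` {..<k})))
                  \<le> card V * (1 - t) ^ (k + 1) / (real k + 1)"
    using exists_tuple_small_clipped_mass_above[OF elect p, of "1 - t" k] assms(5,6) by auto
  define S0 where "S0 = f ` {..<k}"
  have "S0 \<subseteq> C" "card S0 \<le> k"
    using f card_image_le[of "{..<k}" f] by (auto simp: S0_def PiE_def Pi_def)
  then obtain S where S: "S0 \<subseteq> S" "S \<subseteq> C" "card S = k"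
    using exists_subset_between[of S0 k C] assms(2) \<open>finite C\<close> by blast
  define excess where "excess v = sum (clipped_mass C (pref v) p (1 - t)) (above_all C (pref v) S0)" for v
  have voter: "(1 - t) - excess v \<le> mass_below C (pref v) p a"
    if "v \<in> V" and "a \<in> above_all C (pref v) S" for v a
    unfolding excess_def using \<open>finite C\<close> p lin[OF \<open>v \<in> V\<close>] S(1,2) that(2) assms(5,6)
    by (rule mass_below_ge_clipped_mass_above)
  have "card W * (1 - t) - card V * (1 - t) ^ (k + 1) / (real k + 1) \<le> (\<Sum>v\<in>W. mass_below C (pref v) p a)"
    if "a \<in> C" and W: "W \<subseteq> prefer_set V pref a S" for a W
  proof -
    have "W \<subseteq> V" and above: "\<And>v. v \<in> W \<Longrightarrow> a \<in> above_all C (pref v) S"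
      using W \<open>a \<in> C\<close> by (auto simp: prefer_set_def above_all_def)
    have "(\<Sum>v\<in>W. excess v) \<le> (\<Sum>v\<in>V. excess v)"
      using \<open>W \<subseteq> V\<close> \<open>finite V\<close>
      by (intro sum_mono2) (auto simp: excess_def clipped_mass_def intro: sum_nonneg)
    also have "\<dots> \<le> card V * (1 - t) ^ (k + 1) / (real k + 1)"
      using small by (simp add: excess_def S0_def)
    moreover have "(\<Sum>v\<in>W. (1 - t) - excess v) \<le> (\<Sum>v\<in>W. mass_below C (pref v) p a)"
      using voter above \<open>W \<subseteq> V\<close> by (intro sum_mono) auto
    ultimately show ?thesis
      by (simp add: sum_subtractf)
  qed
  with S(2,3) show ?thesis
    by blast
qed

lemma sum_challenge_payoff_eq_sum_mass_below:
  assumes "finite C" and "finite W"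
  shows "(\<Sum>c\<in>C. p c * challenge_payoff pref c (a, W)) = (\<Sum>v\<in>W. mass_below C (pref v) p a)"
proof -
  have "(\<Sum>c\<in>C. p c * challenge_payoff pref c (a, W)) = (\<Sum>c\<in>C. \<Sum>v\<in>W. p c * of_bool (pref v a c))"
    using assms(2) by (simp add: challenge_payoff_def sum_distrib_left Int_def conj_commute mult.commute)
  also have "\<dots> = (\<Sum>v\<in>W. \<Sum>c\<in>C. p c * of_bool (pref v a c))"
    by (rule sum.swap)
  also have "\<dots> = (\<Sum>v\<in>W. mass_below C (pref v) p a)"
    using assms(1) by (simp add: mass_below_def Int_def sum.inter_filter)
  finally show ?thesis .
qed

section \<open>Undominated committees\<close>

lemma exists_lottery_against_challenges:
  fixes pref :: "'v \<Rightarrow> 'c \<Rightarrow> 'c \<Rightarrow> bool"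
  assumes elect: "election V C pref" and "C \<noteq> {}" and "r \<le> card V" and "0 < \<epsilon>"
  shows "\<exists>p. (\<forall>c\<in>C. 0 \<le> p c) \<and> (\<Sum>c\<in>C. p c) = 1 \<and>
           (\<forall>j\<in>challenges V C r. (\<Sum>c\<in>C. p c * challenge_payoff pref c j)
              \<le> real r - (real r)\<^sup>2 / (2 * real (card V)) + \<epsilon>)"
proof -
  have V: "finite V" "V \<noteq> {}" and "finite C"
    using elect by (auto simp: election_def)
  interpret bounded_game C "challenges V C r" "challenge_payoff pref" "real (card V)"
    "real r - (real r)\<^sup>2 / (2 * real (card V))"
  proof
    show "finite (challenges V C r)"
      using V(1) \<open>finite C\<close> by (rule finite_challenges)
    show "challenges V C r \<noteq> {}"
      using assms(2,3) by (rule challenges_nonempty)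
    show "0 < real (card V)"
      using V by (simp add: card_gt_0_iff)
    show "0 \<le> challenge_payoff pref c j \<and> challenge_payoff pref c j \<le> real (card V)"
      if "j \<in> challenges V C r" for c j
    proof -
      have "{v \<in> snd j. pref v (fst j) c} \<subseteq> V"
        using that by (auto simp: challenges_def)
      then show ?thesis
        using V by (simp add: challenge_payoff_def card_mono)
    qed
  qed (use assms \<open>finite C\<close> challenge_best_response[OF elect] in auto)
  show ?thesis
    using assms(4) by (rule approx_minimax)
qed

lemma exists_committee_few_supporters:
  fixes pref :: "'v \<Rightarrow> 'c \<Rightarrow> 'c \<Rightarrow> bool" and t :: real
  assumes elect: "election V C pref" and "C \<noteq> {}" and "k \<le> card C" and "r \<le> card V"
    and "0 \<le> t" "t \<le> 1"
    and "real r - (real r)\<^sup>2 / (2 * real (card V))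
           < r * (1 - t) - card V * (1 - t) ^ (k + 1) / (real k + 1)"
  shows "\<exists>S. S \<subseteq> C \<and> card S = k \<and> (\<forall>a\<in>C. card (prefer_set V pref a S) < r)"
proof -
  define \<beta> where "\<beta> = real r - (real r)\<^sup>2 / (2 * real (card V))"
  define lower where "lower = r * (1 - t) - card V * (1 - t) ^ (k + 1) / (real k + 1)"
  have "finite C" "finite V"
    using elect by (auto simp: election_def)
  have "\<beta> < lower"
    using assms(7) by (simp add: \<beta>_def lower_def)
  then obtain p where p: "\<forall>c\<in>C. 0 \<le> p c" "sum p C = 1"
    and game_value: "\<forall>j\<in>challenges V C r. (\<Sum>c\<in>C. p c * challenge_payoff pref c j)
                       \<le> \<beta> + (lower - \<beta>) / 2"
    using exists_lottery_against_challenges[OF elect assms(2,4), of "(lower - \<beta>) / 2"]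
    by (auto simp: \<beta>_def)
  obtain S where S: "S \<subseteq> C" "card S = k"
    and mass: "\<forall>a\<in>C. \<forall>W\<subseteq>prefer_set V pref a S.
                 card W * (1 - t) - card V * (1 - t) ^ (k + 1) / (real k + 1)
                   \<le> (\<Sum>v\<in>W. mass_below C (pref v) p a)"
    using exists_committee_large_mass_below[OF elect assms(3) p assms(5,6)] by blast
  have "card (prefer_set V pref a S) < r" if "a \<in> C" for a
  proof (rule ccontr)
    assume "\<not> card (prefer_set V pref a S) < r"
    then obtain W where W: "W \<subseteq> prefer_set V pref a S" "card W = r"
      by (meson not_less obtain_subset_with_card_n)
    then have "W \<subseteq> V"
      by (auto simp: prefer_set_def)
    then have "finite W" "(a, W) \<in> challenges V C r"
      using \<open>finite V\<close> W(2) \<open>a \<in> C\<close> finite_subset by (auto simp: challenges_def)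
    then have "(\<Sum>v\<in>W. mass_below C (pref v) p a) \<le> \<beta> + (lower - \<beta>) / 2"
      using game_value \<open>finite C\<close> by (simp flip: sum_challenge_payoff_eq_sum_mass_below)
    moreover have "lower \<le> (\<Sum>v\<in>W. mass_below C (pref v) p a)"
      using mass \<open>a \<in> C\<close> W by (auto simp: lower_def)
    ultimately have "lower \<le> \<beta> + (lower - \<beta>) / 2"
      by (rule order_trans[rotated])
    with \<open>\<beta> < lower\<close> show False
      by (simp add: field_simps)
  qed
  with S show ?thesis
    by blast
qed

lemma one_minus_less_exp_neg:
  fixes t :: real
  assumes "0 < t" and "t \<le> 2"
  shows "1 - t < exp (- t)"
proof -
  have "1 - t < (1 - t / 2)\<^sup>2"
    using assms(1) by (simp add: power2_eq_square field_simps)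
  also have "\<dots> \<le> exp (- (t / 2)) ^ 2"
    using assms(2) exp_ge_add_one_self[of "- (t / 2)"] by (intro power_mono) auto
  also have "\<dots> = exp (- t)"
    by (simp flip: exp_of_nat_mult)
  finally show ?thesis .
qed

lemma one_minus_div_power_less_exp:
  fixes L :: real
  assumes "0 < L" and "L < k"
  shows "(1 - L / k) ^ k < exp (- L)"
proof -
  have "0 < real k"
    using assms by linarith
  then have "0 < L / k" "L / k \<le> 2" "L / k < 1"
    using assms by (simp_all add: field_simps)
  then have "1 - L / k < exp (- (L / k))" and "0 \<le> 1 - L / k"
    by (simp_all add: one_minus_less_exp_neg)
  then have "(1 - L / k) ^ k < exp (- (L / k)) ^ k"
    using \<open>0 < real k\<close> by (intro power_strict_mono) auto
  also have "\<dots> = exp (- L)"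
    using assms by (simp flip: exp_of_nat_mult)
  finally show ?thesis .
qed

lemma exists_threshold:
  fixes \<alpha> n r :: real and k :: nat
  assumes "1 \<le> k" and "0 < \<alpha>" "\<alpha> < 1" and hyp: "2 / (real k + 1) \<le> \<alpha> / (1 - ln \<alpha>)"
    and "0 < n" and "\<alpha> * n \<le> r"
  shows "\<exists>t. 0 \<le> t \<and> t \<le> 1 \<and> r - r\<^sup>2 / (2 * n) < r * (1 - t) - n * (1 - t) ^ (k + 1) / (real k + 1)"
proof -
  define L where "L = - ln \<alpha>"
  define t where "t = L / k"
  have "0 < L"
    using assms(2,3) by (simp add: L_def)
  have "0 < \<alpha> * n"
    using assms(2,5) by simp
  with assms(6) have "0 < r"
    by linarith
  have "k * t = L"
    using assms(1) by (simp add: t_def)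
  have L_bound: "(1 + L) / (real k + 1) \<le> \<alpha> / 2"
    using hyp \<open>0 < L\<close> by (simp add: L_def field_simps)
  moreover have "\<alpha> * k \<le> k"
    using assms(3) mult_right_mono[of \<alpha> 1 "real k"] by simp
  ultimately have "L < k"
    using assms(3) by (simp add: field_simps)
  then have t: "0 < t" "t < 1"
    using \<open>0 < L\<close> by (simp_all add: t_def field_simps)
  have "(1 - t) ^ k < \<alpha>"
    using one_minus_div_power_less_exp[OF \<open>0 < L\<close> \<open>L < k\<close>] assms(2) by (simp add: t_def L_def)
  then have "n * (1 - t) ^ k < n * \<alpha>"
    using assms(5) by simp
  then have "n * (1 - t) ^ k < r"
    using assms(6) by (metis mult.commute order_less_le_trans)
  then have "n * (1 - t) ^ k * (1 - t) < r * (1 - t)"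
    using t by (simp add: mult_strict_right_mono)
  then have "n * (1 - t) ^ (k + 1) < r * (1 - t)"
    by (simp add: mult_ac)
  then have "r * t + n * (1 - t) ^ (k + 1) / (real k + 1) < r * t + r * (1 - t) / (real k + 1)"
    by (simp add: divide_strict_right_mono)
  also have "\<dots> = r * ((1 + L) / (real k + 1))"
    using \<open>k * t = L\<close>[symmetric] by (simp add: field_simps)
  also have "\<dots> \<le> r * (\<alpha> / 2)"
    using L_bound \<open>0 < r\<close> by (intro mult_left_mono) auto
  also have "\<dots> \<le> r\<^sup>2 / (2 * n)"
    using assms(5) mult_right_mono[OF assms(6), of r] \<open>0 < r\<close>
    by (simp add: field_simps power2_eq_square)
  finally show ?thesis
    using t by (intro exI[of _ t]) (simp add: field_simps)
qed

lemma exists_committee_undominated_one: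
  fixes pref :: "'v \<Rightarrow> 'c \<Rightarrow> 'c \<Rightarrow> bool"
  assumes elect: "election V C pref" and "1 \<le> k" and "k \<le> card C"
  shows "\<exists>S. S \<subseteq> C \<and> card S = k \<and> undominated 1 V C pref S"
proof -
  have V: "finite V" "V \<noteq> {}" and "finite C" and lin: "\<And>v. v \<in> V \<Longrightarrow> strict_linear_order_on C (pref v)"
    using elect by (auto simp: election_def)
  obtain v0 where "v0 \<in> V"
    using V by blast
  have "C \<noteq> {}"
    using assms(2,3) by auto
  then obtain c0 where c0: "c0 \<in> C" "\<forall>d\<in>C. d \<noteq> c0 \<longrightarrow> pref v0 c0 d"
    using strict_linear_order_on_ex_top[OF lin[OF \<open>v0 \<in> V\<close>] \<open>finite C\<close>] by blast
  obtain S where S: "{c0} \<subseteq> S" "S \<subseteq> C" "card S = k"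
    using exists_subset_between[of "{c0}" k C] assms(2,3) c0(1) \<open>finite C\<close> by auto
  have "card (prefer_set V pref a S) < card V" if "a \<in> C" for a
  proof -
    have "\<not> pref v0 a c0"
      using c0 that lin[OF \<open>v0 \<in> V\<close>] strict_linear_order_on_asym[OF lin[OF \<open>v0 \<in> V\<close>]]
      unfolding strict_linear_order_on_def by metis
    then have "prefer_set V pref a S \<subseteq> V - {v0}"
      using S(1) by (auto simp: prefer_set_def)
    then have "card (prefer_set V pref a S) \<le> card (V - {v0})"
      using V(1) by (intro card_mono) auto
    also have "\<dots> < card V"
      using V(1) \<open>v0 \<in> V\<close> by (rule card_Diff1_less)
    finally show ?thesis .
  qed
  then have "undominated 1 V C pref S"
    using V by (simp add: undominated_def card_gt_0_iff)
  with S(2,3) show ?thesis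
    by blast
qed

theorem theorem1:
  fixes k :: nat and \<alpha> :: real
    and V :: "'v set" and C :: "'c set" and pref :: "'v \<Rightarrow> 'c \<Rightarrow> 'c \<Rightarrow> bool"
  assumes "k \<ge> 1"
    and "0 < \<alpha>" and "\<alpha> \<le> 1"
    and "\<alpha> / (1 - ln \<alpha>) \<ge> 2 / (real k + 1)"
    and "election V C pref"
    and "k \<le> card C"
  shows "\<exists>S. S \<subseteq> C \<and> card S = k \<and> undominated \<alpha> V C pref S"
proof (cases "\<alpha> = 1")
  case True
  with assms(1,5,6) show ?thesis
    by (simp add: exists_committee_undominated_one)
next
  case False
  define n where "n = card V"
  define r where "r = nat \<lceil>\<alpha> * n\<rceil>"
  have "0 < n" "C \<noteq> {}"
    using assms(1,5,6) by (auto simp: n_def election_def card_gt_0_iff)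
  have "\<alpha> * n \<le> r" and "r \<le> n"
    using assms(3) mult_right_mono[of \<alpha> 1 "real n"] by (simp_all add: r_def real_nat_ceiling_ge)
  obtain t :: real where "0 \<le> t" "t \<le> 1"
    and "real r - (real r)\<^sup>2 / (2 * n) < r * (1 - t) - n * (1 - t) ^ (k + 1) / (real k + 1)"
    using exists_threshold[of k \<alpha> n r] assms(1-4) False \<open>0 < n\<close> \<open>\<alpha> * n \<le> r\<close> by auto
  then obtain S where S: "S \<subseteq> C" "card S = k" and few: "\<forall>a\<in>C. card (prefer_set V pref a S) < r"
    using exists_committee_few_supporters[OF assms(5) \<open>C \<noteq> {}\<close> assms(6)] \<open>r \<le> n\<close>
    by (auto simp: n_def)
  have "card (prefer_set V pref a S) < \<alpha> * n" if "a \<in> C" for a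
    using few that by (auto simp: r_def less_ceiling_iff zless_nat_eq_int_zless)
  then have "undominated \<alpha> V C pref S"
    using \<open>0 < n\<close> by (simp add: undominated_def n_def pos_divide_less_eq mult.commute)
  with S show ?thesis
    by blast
qed

end
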